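(* For every integer $k\ge 0$ let $\sigma^{-1}_{2^k}:\{1,\dots,2^k\}\to\{1,\dots,2^k\}$ be defined recursively by $\sigma^{-1}_{2^0}(1)=1$ and, for $k\ge 1$ and $1\le n\le 2^{k-1}$, $$\sigma^{-1}_{2^k}(2n-1)=\sigma^{-1}_{2^{k-1}}(n),\qquad \sigma^{-1}_{2^k}(2n)=2^k+1-\sigma^{-1}_{2^{k-1}}(n).$$ Then for every $k\ge 0$, $\sigma^{-1}_{2^k}$ is a permutation of $\{1,\dots,2^k\}$ and it is the inverse permutation of $\sigma_{2^k}$, i.e. $\sigma^{-1}_{2^k}(\sigma_{2^k}(n))=n$ for all $n\in\{1,\dots,2^k\}$.
   Context: Let $f:I\subset\mathbb{R}\to I$ be a unimodal map depending on a parameter, with a maximum at its critical point $C$, undergoing a period-doubling cascade. For the superstable $2^k$-periodic orbit $\{C,f(C),\dots,f^{2^k-1}(C)\}$ of the cascade, label its points in descending order of the real line as $C^*_{(1,2^k)}>C^*_{(2,2^k)}>\dots>C^*_{(2^k,2^k)}$, and let $\sigma_{2^k}(i)\in\{1,\dots,2^k\}$ be the number of iterations with $f^{\sigma_{2^k}(i)}(C)=C^*_{(i,2^k)}$. The permutation $\sigma_{2^k}=(\sigma_{2^k}(1),\dots,\sigma_{2^k}(2^k))$ of $\{1,\dots,2^k\}$ is (by earlier work) characterized purely combinatorially by $\sigma_{2^0}(1)=1$ and, for $k\ge 0$ and $n=1,\dots,2^k$, $$\sigma_{2^{k+1}}(n)=2\sigma_{2^k}(n)-1,\qquad \sigma_{2^{k+1}}(2^k+n)=2\sigma_{2^k}(2^k-n+1).$$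 This recurrence may be taken as the definition of $\sigma_{2^k}$. *)

theory Defs
  imports Main "HOL-Library.FuncSet"
begin

text \<open>sigma k n is sigma_{2^k}(n) for n in {1..2^k}; value 0 outside that range (irrelevant).\<close>
fun sigma :: "nat \<Rightarrow> nat \<Rightarrow> nat" where
  "sigma 0 n = (if n = 1 then 1 else 0)"
| "sigma (Suc k) n =
     (if 1 \<le> n \<and> n \<le> 2^k then 2 * sigma k n - 1
      else if 2^k < n \<and> n \<le> 2^(Suc k) then 2 * sigma k (2^(Suc k) - n + 1)
      else 0)"

text \<open>sigma_inv k m is the recursively defined sigma^{-1}_{2^k}(m) for m in {1..2^k};
  odd m = 2n-1 gives n = (m+1) div 2, even m = 2n gives n = m div 2.\<close>
fun sigma_inv :: "nat \<Rightarrow> nat \<Rightarrow> nat" where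
  "sigma_inv 0 m = (if m = 1 then 1 else 0)"
| "sigma_inv (Suc k) m =
     (if 1 \<le> m \<and> m \<le> 2^(Suc k) then
        (if odd m then sigma_inv k ((m + 1) div 2)
         else 2^(Suc k) + 1 - sigma_inv k (m div 2))
      else 0)"

end

theory Submission
  imports Defs
begin

text \<open>By induction on k, sigma maps {1..2^k} into itself and sigma_inv undoes it: the
  recursions for sigma and sigma_inv mirror each other, odd values 2s-1 of sigma coming from
  the lower half and even values 2s from the reflected upper half. A left inverse of an
  endomap of a finite set is a bijection of that set, which gives the rest.\<close>

lemma bij_betw_left_inverse_of_endomap:
  assumes "finite A" and g_into: "g ` A \<subseteq> A" and left_inv: "\<And>x. x \<in> A \<Longrightarrow> f (g x) = x"
  shows "bij_betw f A A"
proof -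
  have "inj_on g A"
    by (metis inj_onI left_inv)
  then have "g ` A = A"
    using \<open>finite A\<close> g_into by (simp add: endo_inj_surj)
  then have "f ` A = f ` g ` A"
    by simp
  also have "\<dots> = (\<lambda>x. f (g x)) ` A"
    by (rule image_image)
  also have "\<dots> = A"
    using left_inv by simp
  finally have "f ` A = A" .
  then show ?thesis
    using \<open>finite A\<close> by (simp add: bij_betw_def finite_surj_inj)
qed

lemma sigma_in_range_and_sigma_inv_sigma:
  "n \<in> {1..2^k} \<Longrightarrow> sigma k n \<in> {1..2^k} \<and> sigma_inv k (sigma k n) = n"
proof (induction k arbitrary: n)
  case 0
  then show ?case by simp
next
  case (Suc k)
  show ?case
  proof (cases "n \<le> 2^k")
    case True
    then obtain s where s: "sigma k n = s" "s \<in> {1..2^k}" "sigma_inv k s = n"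
      using Suc by auto
    have "sigma (Suc k) n = 2 * s - 1"
      using True Suc.prems s by simp
    moreover have "odd (2 * s - 1)" and "(2 * s - 1 + 1) div 2 = s"
      using s by auto
    ultimately show ?thesis
      using s by auto
  next
    case False
    define m where "m = 2^Suc k - n + 1"
    have "m \<in> {1..2^k}"
      using False Suc.prems unfolding m_def by auto
    then obtain s where s: "sigma k m = s" "s \<in> {1..2^k}" "sigma_inv k s = m"
      using Suc.IH by blast
    have "sigma (Suc k) n = 2 * s"
      using False Suc.prems s by (simp add: m_def)
    moreover have "sigma_inv (Suc k) (2 * s) = 2^Suc k + 1 - m"
      using s by auto
    moreover have "2^Suc k + 1 - m = n"
      using False Suc.prems unfolding m_def by auto
    ultimately show ?thesis
      using s by auto
  qed
qed

theorem proposition1: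
  fixes k :: nat
  shows "bij_betw (sigma_inv k) {1..2^k} {1..2^k}
         \<and> (\<forall>n \<in> {1..2^k}. sigma_inv k (sigma k n) = n)"
  using bij_betw_left_inverse_of_endomap[of "{1..2^k}" "sigma k" "sigma_inv k"]
    sigma_in_range_and_sigma_inv_sigma
  by blast

end
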